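(* Let $n\geq3$ be odd. Let $\mathcal{Q}$ be the set of partitions $p$ of $\{1,\dots,n\}$ such that one block of $p$ has odd cardinality and all other blocks have cardinality $2$. For $p\in\mathcal{Q}$ let $\varepsilon''(p)=(-1)^{\frac12(|I|-1)}$, where $I$ is the odd block of $p$. Then $\sum_{p\in\mathcal{Q}}\varepsilon(p)\varepsilon''(p)=0$.
   Context: For an ordered partition $P=(I_1,\dots,I_k)$ of $\{1,\dots,n\}$ into nonempty blocks with $n_i=|I_i|$, $\sigma_P\in\mathfrak{S}_n$ is the unique permutation such that $\sigma_P^{-1}$ maps $\{n_1+\dots+n_i+1,\dots,n_1+\dots+n_{i+1}\}$ increasingly onto $I_{i+1}$, and $\varepsilon(P)=\mathrm{sgn}(\sigma_P)$. For a partition $p$ with at most one block of odd cardinality, $\varepsilon(P)$ does not depend on the ordering $P$ of the blocks of $p$, and this common value is $\varepsilon(p)$. *)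

theory Defs
  imports "HOL-Combinatorics.Permutations" "HOL-Library.Disjoint_Sets"
begin

text \<open>An ordered partition of {1..n} is a list Is of blocks.\<close>
definition sigmaP_inv :: "nat \<Rightarrow> nat set list \<Rightarrow> nat \<Rightarrow> nat" where
  "sigmaP_inv n Is = (\<lambda>j. if j \<in> {1..n} then concat (map sorted_list_of_set Is) ! (j - 1) else j)"

definition sigmaP :: "nat \<Rightarrow> nat set list \<Rightarrow> nat \<Rightarrow> nat" where
  "sigmaP n Is = inv (sigmaP_inv n Is)"

definition eps_ord :: "nat \<Rightarrow> nat set list \<Rightarrow> int" where
  "eps_ord n Is = sign (sigmaP n Is)"

text \<open>epsilon of an (unordered) partition: epsilon of some ordering of its blocks
  (well defined when at most one block is odd).\<close>
definition eps_part :: "nat \<Rightarrow> nat set set \<Rightarrow> int" where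
  "eps_part n p = eps_ord n (SOME Is. distinct Is \<and> set Is = p)"

definition odd_block :: "nat set set \<Rightarrow> nat set" where
  "odd_block p = (THE I. I \<in> p \<and> odd (card I))"

definition eps2 :: "nat set set \<Rightarrow> int" where
  "eps2 p = (-1) ^ ((card (odd_block p) - 1) div 2)"

definition Qset :: "nat \<Rightarrow> nat set set set" where
  "Qset n = {p. partition_on {1..n} p \<and>
      (\<exists>I\<in>p. odd (card I) \<and> (\<forall>J\<in>p. J \<noteq> I \<longrightarrow> card J = 2))}"

end

theory Submission
  imports Defs "HOL-Combinatorics.Multiset_Permutations"
begin

(* A sign-reversing involution on Q.  If {1,2} is a block of p, merge it into the odd block I;
   if 1 and 2 both lie in I, split {1,2} off I.  These moves are mutually inverse and change |I|
   by 2, which flips eps''; they do not change eps, because listing the blocks {1,2}, I - {1,2}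
   increasingly gives the same word as listing I increasingly.  Otherwise 1 and 2 lie in
   different blocks, and exchanging the values 1 and 2 keeps every block increasing, so it
   composes sigma_P with a transposition: eps flips and eps'' is unchanged.  Throughout, eps is
   computed from any ordering of the blocks, which is legitimate because moving a block past a
   word of even length is an even permutation. *)

section \<open>Signs of words\<close>

definition word_perm :: "nat \<Rightarrow> nat list \<Rightarrow> nat \<Rightarrow> nat" where
  "word_perm n xs = (\<lambda>j. if j \<in> {1..n} then xs ! (j - 1) else j)"

definition word_sign :: "nat \<Rightarrow> nat list \<Rightarrow> int" where
  "word_sign n xs = sign (word_perm n xs)"

lemma word_perm_permutes:
  assumes xs: "xs \<in> permutations_of_set {1..n}"
  shows "word_perm n xs permutes {1..n}"
proof (rule bij_imp_permutes)
  have len: "length xs = n"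
    using length_finite_permutations_of_set[OF xs] by simp
  have "bij_betw (\<lambda>j. j - 1) {1..n} {..<n}"
    by (rule bij_betw_byWitness[where f' = Suc]) auto
  moreover have "bij_betw ((!) xs) {..<n} {1..n}"
    using xs len by (intro bij_betw_nth) (auto dest: permutations_of_setD)
  ultimately have "bij_betw ((!) xs \<circ> (\<lambda>j. j - 1)) {1..n} {1..n}"
    by (rule bij_betw_trans)
  then show "bij_betw (word_perm n xs) {1..n} {1..n}"
    by (rule bij_betw_cong[THEN iffD1, rotated]) (simp add: word_perm_def)
  show "word_perm n xs j = j" if "j \<notin> {1..n}" for j
    using that by (auto simp: word_perm_def)
qed

lemma permutation_word_perm:
  "xs \<in> permutations_of_set {1..n} \<Longrightarrow> permutation (word_perm n xs)"
  using word_perm_permutes permutation_permutes by blast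

lemma permutations_of_set_mset_eq:
  "xs \<in> permutations_of_set A \<Longrightarrow> mset ys = mset xs \<Longrightarrow> ys \<in> permutations_of_set A"
  unfolding permutations_of_set_def by (metis mem_Collect_eq mset_eq_setD mset_eq_imp_distinct_iff)

lemma word_sign_map:
  assumes xs: "xs \<in> permutations_of_set {1..n}" and f: "f permutes {1..n}"
  shows "word_sign n (map f xs) = sign f * word_sign n xs"
proof -
  have len: "length xs = n"
    using length_finite_permutations_of_set[OF xs] by simp
  have "word_perm n (map f xs) = f \<circ> word_perm n xs"
    using len permutes_not_in[OF f] by (auto simp: word_perm_def fun_eq_iff)
  moreover have "permutation f"
    using f finite_atLeastAtMost permutation_permutes by blast
  ultimately show ?thesis
    unfolding word_sign_def by (simp add: sign_compose permutation_word_perm[OF xs])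
qed

lemma word_sign_swap_adjacent:
  assumes xs: "A @ [x, y] @ D \<in> permutations_of_set {1..n}"
  shows "word_sign n (A @ [y, x] @ D) = - word_sign n (A @ [x, y] @ D)"
proof -
  let ?k = "length A"
  have len: "length (A @ [x, y] @ D) = n"
    using length_finite_permutations_of_set[OF xs] by simp
  have "word_perm n (A @ [y, x] @ D) = word_perm n (A @ [x, y] @ D) \<circ> transpose (?k + 1) (?k + 2)"
  proof
    fix j
    show "word_perm n (A @ [y, x] @ D) j = (word_perm n (A @ [x, y] @ D) \<circ> transpose (?k + 1) (?k + 2)) j"
      using len
      by (cases "j = ?k + 1"; cases "j = ?k + 2")
         (auto simp: word_perm_def nth_append transpose_def nth_Cons split: nat.splits)
  qed
  then show ?thesis
    unfolding word_sign_def
    using sign_compose[OF permutation_word_perm[OF xs] permutation_swap_id] by (simp add: sign_swap_id)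
qed

lemma word_sign_move_past:
  "A @ [x] @ C @ D \<in> permutations_of_set {1..n} \<Longrightarrow>
    word_sign n (A @ C @ [x] @ D) = (-1) ^ length C * word_sign n (A @ [x] @ C @ D)"
proof (induction C arbitrary: A)
  case Nil
  then show ?case by simp
next
  case (Cons y C)
  have "A @ [x, y] @ C @ D \<in> permutations_of_set {1..n}"
    using Cons.prems by simp
  then have swap: "word_sign n ((A @ [y]) @ [x] @ C @ D) = - word_sign n (A @ [x] @ (y # C) @ D)"
    using word_sign_swap_adjacent by fastforce
  have "(A @ [y]) @ [x] @ C @ D \<in> permutations_of_set {1..n}"
    by (rule permutations_of_set_mset_eq[OF Cons.prems]) simp
  from Cons.IH[OF this] swap show ?case
    by simp
qed

lemma word_sign_move_block:
  "A @ X @ C @ D \<in> permutations_of_set {1..n} \<Longrightarrow>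
    word_sign n (A @ C @ X @ D) = (-1) ^ (length X * length C) * word_sign n (A @ X @ C @ D)"
proof (induction X arbitrary: A)
  case Nil
  then show ?case by simp
next
  case (Cons x X)
  have "(A @ [x]) @ X @ C @ D \<in> permutations_of_set {1..n}"
    using Cons.prems by simp
  note IH = Cons.IH[OF this]
  have "A @ [x] @ C @ (X @ D) \<in> permutations_of_set {1..n}"
    by (rule permutations_of_set_mset_eq[OF Cons.prems]) simp
  note move = word_sign_move_past[OF this]
  show ?case
    using IH move by (simp add: power_add algebra_simps)
qed

section \<open>Block words and the sign of a partition\<close>

definition block_word :: "'a::linorder set list \<Rightarrow> 'a list" where
  "block_word Is = concat (map sorted_list_of_set Is)"

lemma block_word_Nil [simp]: "block_word [] = []"
  and block_word_Cons [simp]: "block_word (X # Is) = sorted_list_of_set X @ block_word Is"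
  and block_word_append [simp]: "block_word (Is @ Js) = block_word Is @ block_word Js"
  by (simp_all add: block_word_def)

lemma even_length_block_word:
  "\<forall>X\<in>set Is. even (card X) \<Longrightarrow> even (length (block_word Is))"
  by (induction Is) (auto simp: length_sorted_list_of_set)

lemma sorted_list_of_set_Un_less:
  assumes "finite A" "finite B" "\<And>x y. x \<in> A \<Longrightarrow> y \<in> B \<Longrightarrow> x < y"
  shows "sorted_list_of_set (A \<union> B) = sorted_list_of_set A @ sorted_list_of_set B"
proof -
  have "A \<inter> B = {}"
    using assms(3) by fastforce
  then have "length (sorted_list_of_set A @ sorted_list_of_set B) = card (A \<union> B)"
    using assms(1,2) by (simp add: card_Un_disjoint length_sorted_list_of_set)
  moreover have "sorted_wrt (<) (sorted_list_of_set A @ sorted_list_of_set B)"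
    using assms by (simp add: sorted_wrt_append strict_sorted_list_of_set)
  ultimately show ?thesis
    using assms(1,2) by (intro sorted_list_of_set_unique[THEN iffD1]) auto
qed

lemma sorted_list_of_set_image_strict_mono_on:
  assumes "finite X" "strict_mono_on X f"
  shows "sorted_list_of_set (f ` X) = map f (sorted_list_of_set X)"
proof -
  have "sorted_wrt (<) (map f (sorted_list_of_set X))"
    unfolding sorted_wrt_map
    by (rule sorted_wrt_mono_rel[OF _ strict_sorted_list_of_set])
       (use assms in \<open>auto simp: strict_mono_on_def\<close>)
  moreover have "length (map f (sorted_list_of_set X)) = card (f ` X)"
    using assms by (simp add: card_image strict_mono_on_imp_inj_on length_sorted_list_of_set)
  ultimately show ?thesis
    using assms by (intro sorted_list_of_set_unique[THEN iffD1]) auto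
qed

lemma block_word_map_image:
  "\<forall>X\<in>set Is. finite X \<and> strict_mono_on X f \<Longrightarrow>
    block_word (map ((`) f) Is) = map f (block_word Is)"
  by (induction Is) (simp_all add: sorted_list_of_set_image_strict_mono_on)

lemma strict_mono_on_transpose_Suc:
  fixes a :: nat
  assumes "\<not> {a, Suc a} \<subseteq> X"
  shows "strict_mono_on X (transpose a (Suc a))"
  using assms by (auto simp: strict_mono_on_def transpose_def)

lemma block_word_in_permutations_of_set:
  assumes P: "partition_on A (set Is)" and "finite A" and "distinct Is"
  shows "block_word Is \<in> permutations_of_set A"
proof
  have fin: "finite X" if "X \<in> set Is" for X
    using that partition_onD1[OF P] \<open>finite A\<close> by (metis Union_upper finite_subset)
  then show "set (block_word Is) = A"
    using partition_onD1[OF P] by (auto simp: block_word_def)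
  have "distinct (map sorted_list_of_set Is)"
    using \<open>distinct Is\<close> fin by (auto simp: distinct_map inj_on_def sorted_list_of_set_inject)
  moreover have "set xs \<inter> set ys = {}"
    if "xs \<in> sorted_list_of_set ` set Is" "ys \<in> sorted_list_of_set ` set Is" "xs \<noteq> ys" for xs ys
    using that fin partition_onD2[OF P] unfolding disjoint_def
    by (metis disjoint_iff image_iff set_sorted_list_of_set)
  ultimately show "distinct (block_word Is)"
    unfolding block_word_def by (intro distinct_concat) auto
qed

definition at_most_one_odd :: "'a set set \<Rightarrow> bool" where
  "at_most_one_odd P \<longleftrightarrow> (\<forall>X\<in>P. \<forall>Y\<in>P. X \<noteq> Y \<longrightarrow> even (card X) \<or> even (card Y))"

lemma word_sign_block_word_reorder:
  "distinct Is \<Longrightarrow> distinct Js \<Longrightarrow> set Is = set Js \<Longrightarrow> at_most_one_odd (set Is) \<Longrightarrow>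
    A @ block_word Is \<in> permutations_of_set {1..n} \<Longrightarrow>
    word_sign n (A @ block_word Is) = word_sign n (A @ block_word Js)"
proof (induction Js arbitrary: A Is)
  case Nil
  then show ?case by simp
next
  case (Cons J Js)
  obtain P R where Is: "Is = P @ J # R"
    using Cons.prems(3) by (metis list.set_intros(1) split_list)
  let ?J = "sorted_list_of_set J"
  have perm: "A @ ?J @ block_word P @ block_word R \<in> permutations_of_set {1..n}"
    by (rule permutations_of_set_mset_eq[OF Cons.prems(5)]) (simp add: Is)
  have even: "even (card J * length (block_word P))"
  proof (cases "even (card J)")
    case False
    have "X \<noteq> J" if "X \<in> set P" for X
      using that Cons.prems(1) Is by auto
    with False Cons.prems(4) have "\<forall>X\<in>set P. even (card X)"
      unfolding Is at_most_one_odd_def by auto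
    then show ?thesis
      by (simp add: even_length_block_word)
  qed simp
  have "word_sign n (A @ block_word Is) = word_sign n (A @ block_word P @ ?J @ block_word R)"
    by (simp add: Is)
  also have "\<dots> = word_sign n (A @ ?J @ block_word P @ block_word R)"
    using word_sign_move_block[OF perm] even by (simp add: length_sorted_list_of_set)
  also have "\<dots> = word_sign n ((A @ ?J) @ block_word (P @ R))"
    by simp
  also have "\<dots> = word_sign n ((A @ ?J) @ block_word Js)"
  proof (rule Cons.IH)
    show "set (P @ R) = set Js"
      using Cons.prems(1-3) Is by auto
    show "at_most_one_odd (set (P @ R))"
      using Cons.prems(4) Is unfolding at_most_one_odd_def by simp
  qed (use Cons.prems Is perm in auto)
  finally show ?case
    by simp
qed

lemma eps_ord_eq_word_sign:
  assumes "partition_on {1..n} (set Is)" "distinct Is"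
  shows "eps_ord n Is = word_sign n (block_word Is)"
proof -
  have "sigmaP_inv n Is = word_perm n (block_word Is)"
    by (simp add: sigmaP_inv_def word_perm_def block_word_def)
  moreover have "block_word Is \<in> permutations_of_set {1..n}"
    using assms by (intro block_word_in_permutations_of_set) auto
  ultimately show ?thesis
    unfolding eps_ord_def sigmaP_def word_sign_def by (simp add: sign_inverse permutation_word_perm)
qed

lemma eps_part_eq_word_sign:
  assumes P: "partition_on {1..n} p" "at_most_one_odd p" and Is: "distinct Is" "set Is = p"
  shows "eps_part n p = word_sign n (block_word Is)"
proof -
  define Js where "Js = (SOME Js. distinct Js \<and> set Js = p)"
  have "finite p"
    using P(1) finite_elements by blast
  then have Js: "distinct Js" "set Js = p"
    unfolding Js_def using finite_distinct_list someI_ex[of "\<lambda>Js. distinct Js \<and> set Js = p"] by auto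
  have "eps_part n p = word_sign n ([] @ block_word Js)"
    unfolding eps_part_def Js_def[symmetric] using eps_ord_eq_word_sign P Js by simp
  also have "\<dots> = word_sign n ([] @ block_word Is)"
    using Js Is P block_word_in_permutations_of_set
    by (intro word_sign_block_word_reorder) auto
  finally show ?thesis
    by simp
qed

section \<open>A sign-reversing involution on Q\<close>

lemma partition_on_replace_blocks:
  assumes P: "partition_on A P" and "B \<subseteq> P" and C: "partition_on (\<Union>B) C"
  shows "partition_on A (P - B \<union> C)"
proof (rule partition_onI)
  show "\<Union>(P - B \<union> C) = A"
    using partition_onD1[OF P] partition_onD1[OF C] \<open>B \<subseteq> P\<close> by blast
  show "{} \<notin> P - B \<union> C"
    using partition_onD3[OF P] partition_onD3[OF C] by blast
  have cross: "disjnt U V" if "U \<in> P - B" "V \<in> C" for U V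
  proof -
    have "disjnt U (\<Union>B)"
      using that \<open>B \<subseteq> P\<close> partition_onD2[OF P] by (auto dest: pairwiseD)
    then show ?thesis
      using that partition_onD1[OF C] by (blast intro: disjnt_subset2)
  qed
  show "disjnt X Y" if "X \<in> P - B \<union> C" "Y \<in> P - B \<union> C" "X \<noteq> Y" for X Y
    using that cross disjnt_sym pairwiseD[OF partition_onD2[OF P]] pairwiseD[OF partition_onD2[OF C]]
    by (metis DiffD1 UnE)
qed

lemma partition_on_subset_block_eq:
  assumes "partition_on A P" "X \<in> P" "Y \<in> P" "X \<subseteq> Y"
  shows "X = Y"
  using assms by (metis disjointD inf.absorb1 partition_onD2 partition_onD3)

lemma odd_block_eqI:
  assumes "I \<in> p" "odd (card I)" "\<And>J. J \<in> p \<Longrightarrow> J \<noteq> I \<Longrightarrow> even (card J)"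
  shows "odd_block p = I"
  unfolding odd_block_def using assms by (intro the_equality) auto

lemma QsetI:
  assumes "partition_on {1..n} p" "I \<in> p" "odd (card I)"
    and "\<And>J. J \<in> p \<Longrightarrow> J \<noteq> I \<Longrightarrow> card J = 2"
  shows "p \<in> Qset n" and "odd_block p = I"
proof -
  show "p \<in> Qset n"
    using assms by (auto simp: Qset_def)
  show "odd_block p = I"
    using assms by (intro odd_block_eqI) auto
qed

lemma QsetD:
  assumes "p \<in> Qset n"
  shows "partition_on {1..n} p" "odd_block p \<in> p" "odd (card (odd_block p))"
    and "\<And>J. J \<in> p \<Longrightarrow> J \<noteq> odd_block p \<Longrightarrow> card J = 2"
proof -
  obtain I where I: "partition_on {1..n} p" "I \<in> p" "odd (card I)"
    "\<forall>J\<in>p. J \<noteq> I \<longrightarrow> card J = 2"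
    using assms by (auto simp: Qset_def)
  moreover have "odd_block p = I"
    using I by (intro odd_block_eqI) auto
  ultimately show "partition_on {1..n} p" "odd_block p \<in> p" "odd (card (odd_block p))"
    and "\<And>J. J \<in> p \<Longrightarrow> J \<noteq> odd_block p \<Longrightarrow> card J = 2"
    by auto
qed

lemma Qset_block_subset:
  assumes "p \<in> Qset n" "X \<in> p"
  shows "X \<subseteq> {1..n}"
  using assms(2) partition_onD1[OF QsetD(1)[OF assms(1)]] by blast

lemma Qset_block_finite: "p \<in> Qset n \<Longrightarrow> X \<in> p \<Longrightarrow> finite X"
  by (meson Qset_block_subset finite_atLeastAtMost finite_subset)

lemma Qset_at_most_one_odd:
  assumes "p \<in> Qset n"
  shows "at_most_one_odd p"
proof -
  have "even (card J)" if "J \<in> p" "J \<noteq> odd_block p" for J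
    using QsetD(4)[OF assms that] by simp
  then show ?thesis
    unfolding at_most_one_odd_def by metis
qed

lemma eps2_odd_block_add_2:
  assumes "card (odd_block q) = card (odd_block p) + 2" "odd (card (odd_block p))"
  shows "eps2 q = - eps2 p"
  using assms by (auto simp: eps2_def elim!: oddE)

lemma Qset_pair_block_notin:
  assumes p: "p \<in> Qset n" and "{1,2} \<subseteq> odd_block p"
  shows "{1,2} \<notin> p"
proof
  assume "{1,2} \<in> p"
  then have "odd_block p = {1,2}"
    by (rule partition_on_subset_block_eq[OF QsetD(1)[OF p] _ QsetD(2)[OF p] assms(2), symmetric])
  then show False
    using QsetD(3)[OF p] by simp
qed

definition weight :: "nat \<Rightarrow> nat set set \<Rightarrow> int" where
  "weight n p = eps_part n p * eps2 p"

definition split12 :: "nat set set \<Rightarrow> nat set set" where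
  "split12 p = insert {1,2} (insert (odd_block p - {1,2}) (p - {odd_block p}))"

definition merge12 :: "nat set set \<Rightarrow> nat set set" where
  "merge12 p = insert (odd_block p \<union> {1,2}) (p - {odd_block p, {1,2}})"

context
  fixes n :: nat and p :: "nat set set"
  assumes p: "p \<in> Qset n" and pair_in_odd_block: "{1,2} \<subseteq> odd_block p"
begin

lemma card_odd_block_minus_pair: "card (odd_block p - {1,2}) + 2 = card (odd_block p)"
proof -
  have fin: "finite (odd_block p)"
    using Qset_block_finite[OF p QsetD(2)[OF p]] .
  then have "card {1,2::nat} \<le> card (odd_block p)"
    using card_mono pair_in_odd_block by blast
  then show ?thesis
    using fin pair_in_odd_block by (simp add: card_Diff_subset)
qed

lemma odd_block_minus_pair_notin: "odd_block p - {1,2} \<notin> p"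
proof
  assume "odd_block p - {1,2} \<in> p"
  then have "odd_block p - {1,2} = odd_block p"
    by (rule partition_on_subset_block_eq[OF QsetD(1)[OF p] _ QsetD(2)[OF p]]) auto
  then show False
    using pair_in_odd_block by auto
qed

lemma Qset_split12: "split12 p \<in> Qset n" "odd_block (split12 p) = odd_block p - {1,2}"
proof -
  let ?I = "odd_block p"
  let ?I' = "?I - {1,2}"
  have "?I' \<noteq> {}"
  proof
    assume "?I' = {}"
    then have "card ?I = 2"
      using card_odd_block_minus_pair by (metis add_0 card.empty)
    then show False
      using QsetD(3)[OF p] by simp
  qed
  then have "partition_on ?I {{1,2}, ?I'}"
    using pair_in_odd_block by (intro partition_onI) (auto simp: disjnt_def)
  then have "partition_on {1..n} (p - {?I} \<union> {{1,2}, ?I'})"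
    using QsetD(2)[OF p] by (intro partition_on_replace_blocks[OF QsetD(1)[OF p]]) auto
  then have part: "partition_on {1..n} (split12 p)"
    by (simp add: split12_def)
  have "odd (card ?I')"
    using QsetD(3)[OF p] by (simp flip: card_odd_block_minus_pair)
  moreover have "card J = 2" if "J \<in> split12 p" "J \<noteq> ?I'" for J
    using that QsetD(4)[OF p] by (auto simp: split12_def)
  ultimately show "split12 p \<in> Qset n" "odd_block (split12 p) = ?I'"
    using QsetI[OF part, of ?I'] by (simp_all add: split12_def)
qed

lemma merge12_split12: "merge12 (split12 p) = p"
proof -
  let ?I = "odd_block p"
  let ?I' = "?I - {1,2}"
  have "merge12 (split12 p) = insert (?I' \<union> {1,2}) (split12 p - {?I', {1,2}})"
    unfolding merge12_def Qset_split12(2) ..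
  also have "?I' \<union> {1,2} = ?I"
    using pair_in_odd_block by auto
  also have "split12 p - {?I', {1,2}} = p - {?I}"
    using odd_block_minus_pair_notin Qset_pair_block_notin[OF p pair_in_odd_block]
    unfolding split12_def by auto
  also have "insert ?I (p - {?I}) = p"
    using QsetD(2)[OF p] by (rule insert_Diff)
  finally show ?thesis .
qed

lemma eps_part_split12: "eps_part n (split12 p) = eps_part n p"
proof -
  let ?I = "odd_block p"
  let ?I' = "?I - {1,2}"
  have "finite (p - {?I})"
    using finite_elements[OF _ QsetD(1)[OF p]] by simp
  then obtain Rs where Rs: "distinct Rs" "set Rs = p - {?I}"
    using finite_distinct_list by blast
  have "eps_part n p = word_sign n (block_word (?I # Rs))"
    using Rs QsetD(2)[OF p]
    by (intro eps_part_eq_word_sign QsetD(1)[OF p] Qset_at_most_one_odd[OF p]) auto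
  also have "block_word (?I # Rs) = block_word ([{1,2}, ?I'] @ Rs)"
  proof -
    have "sorted_list_of_set ?I = sorted_list_of_set ({1,2} \<union> ?I')"
      by (simp only: Diff_partition[OF pair_in_odd_block])
    also have "\<dots> = sorted_list_of_set {1,2} @ sorted_list_of_set ?I'"
    proof (rule sorted_list_of_set_Un_less)
      show "finite ?I'"
        using Qset_block_finite[OF p QsetD(2)[OF p]] by simp
      show "x < y" if "x \<in> {1,2}" "y \<in> ?I'" for x y :: nat
        using that Qset_block_subset[OF p QsetD(2)[OF p]] by fastforce
    qed simp
    finally show ?thesis
      by simp
  qed
  also have "word_sign n (block_word ([{1,2}, ?I'] @ Rs)) = eps_part n (split12 p)"
    using Rs odd_block_minus_pair_notin Qset_pair_block_notin[OF p pair_in_odd_block] Qset_split12(1)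
    by (intro eps_part_eq_word_sign[symmetric] QsetD(1) Qset_at_most_one_odd)
       (auto simp: split12_def)
  finally show ?thesis
    by simp
qed

lemma weight_split12: "weight n (split12 p) = - weight n p"
proof -
  have "eps2 p = - eps2 (split12 p)"
    using card_odd_block_minus_pair Qset_split12(2) QsetD(3)[OF Qset_split12(1)]
    by (intro eps2_odd_block_add_2) simp_all
  then show ?thesis
    unfolding weight_def eps_part_split12 by simp
qed

end

context
  fixes n :: nat and p :: "nat set set"
  assumes p: "p \<in> Qset n" and pair_block: "{1,2} \<in> p"
begin

lemma odd_block_disjoint_pair: "odd_block p \<inter> {1,2} = {}"
proof -
  have "odd_block p \<noteq> {1,2}"
    using QsetD(3)[OF p] by auto
  then show ?thesis
    using disjointD[OF partition_onD2[OF QsetD(1)[OF p]] QsetD(2)[OF p] pair_block] by simp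
qed

lemma Qset_merge12: "merge12 p \<in> Qset n" "odd_block (merge12 p) = odd_block p \<union> {1,2}"
proof -
  let ?I = "odd_block p"
  have "partition_on {1..n} (p - {?I, {1,2}} \<union> {?I \<union> {1,2}})"
    using QsetD(2)[OF p] pair_block
    by (intro partition_on_replace_blocks[OF QsetD(1)[OF p]]) (auto intro: partition_on_space)
  then have part: "partition_on {1..n} (merge12 p)"
    by (simp add: merge12_def)
  have "card (?I \<union> {1,2}) = card ?I + 2"
    using odd_block_disjoint_pair Qset_block_finite[OF p QsetD(2)[OF p]] by (simp add: card_Un_disjoint)
  then have "odd (card (?I \<union> {1,2}))"
    using QsetD(3)[OF p] by simp
  moreover have "card J = 2" if "J \<in> merge12 p" "J \<noteq> ?I \<union> {1,2}" for J
    using that QsetD(4)[OF p] by (auto simp: merge12_def)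
  ultimately show "merge12 p \<in> Qset n" "odd_block (merge12 p) = ?I \<union> {1,2}"
    using QsetI[OF part, of "?I \<union> {1,2}"] by (auto simp: merge12_def)
qed

lemma pair_subset_odd_block_merge12: "{1,2} \<subseteq> odd_block (merge12 p)"
  by (simp add: Qset_merge12(2))

lemma split12_merge12: "split12 (merge12 p) = p"
proof -
  let ?I = "odd_block p"
  let ?K = "?I \<union> {1,2}"
  have "?K \<notin> p"
  proof
    assume "?K \<in> p"
    then have "?I = ?K"
      by (rule partition_on_subset_block_eq[OF QsetD(1,2)[OF p]]) blast
    then show False
      using odd_block_disjoint_pair by auto
  qed
  have "split12 (merge12 p) = insert {1,2} (insert (?K - {1,2}) (merge12 p - {?K}))"
    unfolding split12_def Qset_merge12(2) ..
  also have "merge12 p - {?K} = p - {?I, {1,2}}"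
    unfolding merge12_def using \<open>?K \<notin> p\<close> by (simp add: Diff_insert_absorb)
  also have "?K - {1,2} = ?I"
    using odd_block_disjoint_pair by auto
  also have "insert {1,2} (insert ?I (p - {?I, {1,2}})) = p"
    using QsetD(2)[OF p] pair_block by blast
  finally show ?thesis .
qed

lemma weight_merge12: "weight n (merge12 p) = - weight n p"
  using weight_split12[OF Qset_merge12(1) pair_subset_odd_block_merge12] split12_merge12 by simp

end

lemma Qset_image_permutes:
  assumes p: "p \<in> Qset n" and f: "f permutes {1..n}"
  shows "(`) f ` p \<in> Qset n" "odd_block ((`) f ` p) = f ` odd_block p"
proof -
  have inj: "inj f"
    using permutes_inj[OF f] .
  have "partition_on (f ` {1..n}) ((`) f ` p - {{}})"
    by (rule partition_on_inj_image[OF QsetD(1)[OF p] inj_on_subset[OF inj subset_UNIV]])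
  moreover have "(`) f ` p - {{}} = (`) f ` p"
    using partition_onD3[OF QsetD(1)[OF p]] by auto
  ultimately have part: "partition_on {1..n} ((`) f ` p)"
    by (metis permutes_image[OF f])
  have card: "card (f ` X) = card X" for X
    using inj by (simp add: card_image inj_on_subset)
  have "card J = 2" if J: "J \<in> (`) f ` p" "J \<noteq> f ` odd_block p" for J
  proof -
    obtain X where X: "X \<in> p" "J = f ` X"
      using J(1) by blast
    then have "X \<noteq> odd_block p"
      using J(2) by blast
    then show ?thesis
      using X QsetD(4)[OF p] card by simp
  qed
  then show "(`) f ` p \<in> Qset n" "odd_block ((`) f ` p) = f ` odd_block p"
    using QsetI[OF part, of "f ` odd_block p"] QsetD(2,3)[OF p] card by auto
qed

definition swap12 :: "nat set set \<Rightarrow> nat set set" where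
  "swap12 p = (`) (transpose 1 2) ` p"

lemma swap12_swap12: "swap12 (swap12 p) = p"
  by (simp add: swap12_def image_image)

lemma Qset_separated_pair:
  assumes p: "p \<in> Qset n" and "{1,2} \<notin> p" "\<not> {1,2} \<subseteq> odd_block p"
  shows "\<forall>X\<in>p. \<not> {1,2} \<subseteq> X"
proof (intro ballI notI)
  fix X
  assume X: "X \<in> p" and sub: "{1,2} \<subseteq> X"
  then have "card X = 2"
    using assms(3) QsetD(4)[OF p] by blast
  then have "{1,2} = X"
    using card_subset_eq[OF Qset_block_finite[OF p X] sub] by simp
  then show False
    using X assms(2) by simp
qed

context
  fixes n :: nat and p :: "nat set set"
  assumes p: "p \<in> Qset n" and n: "2 \<le> n" and separated: "\<forall>X\<in>p. \<not> {1,2} \<subseteq> X"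
begin

lemma Qset_swap12: "swap12 p \<in> Qset n" "odd_block (swap12 p) = transpose 1 2 ` odd_block p"
  using Qset_image_permutes[OF p permutes_swap_id] n unfolding swap12_def by auto

lemma swap12_separated: "\<forall>X\<in>swap12 p. \<not> {1,2} \<subseteq> X"
  using separated by (auto simp: swap12_def in_transpose_image_iff)

lemma eps_part_swap12: "eps_part n (swap12 p) = - eps_part n p"
proof -
  let ?t = "transpose (1::nat) 2"
  have "finite p"
    using finite_elements[OF _ QsetD(1)[OF p]] by simp
  then obtain Is where Is: "distinct Is" "set Is = p"
    using finite_distinct_list by blast
  have "eps_part n (swap12 p) = word_sign n (block_word (map ((`) ?t) Is))"
    using Is Qset_swap12(1)
    by (intro eps_part_eq_word_sign QsetD(1) Qset_at_most_one_odd)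
       (auto simp: swap12_def distinct_map inj_on_def inj_image_eq_iff[OF inj_transpose])
  also have "block_word (map ((`) ?t) Is) = map ?t (block_word Is)"
    using Is separated Qset_block_finite[OF p] strict_mono_on_transpose_Suc[of 1, unfolded Suc_1]
    by (intro block_word_map_image) auto
  also have "word_sign n (map ?t (block_word Is)) = sign ?t * word_sign n (block_word Is)"
    using Is n QsetD(1)[OF p]
    by (intro word_sign_map block_word_in_permutations_of_set permutes_swap_id) auto
  also have "word_sign n (block_word Is) = eps_part n p"
    using Is by (intro eps_part_eq_word_sign[symmetric] QsetD(1)[OF p] Qset_at_most_one_odd[OF p])
  finally show ?thesis
    by (simp add: sign_swap_id)
qed

lemma weight_swap12: "weight n (swap12 p) = - weight n p"
proof -
  have "eps2 (swap12 p) = eps2 p"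
    unfolding eps2_def Qset_swap12(2) by (simp add: card_image)
  then show ?thesis
    unfolding weight_def eps_part_swap12 by simp
qed

end

definition switch12 :: "nat set set \<Rightarrow> nat set set" where
  "switch12 p =
    (if {1,2} \<in> p then merge12 p else if {1,2} \<subseteq> odd_block p then split12 p else swap12 p)"

lemma switch12_involution:
  assumes p: "p \<in> Qset n" and n: "2 \<le> n"
  shows "switch12 p \<in> Qset n \<and> switch12 (switch12 p) = p \<and> weight n (switch12 p) = - weight n p"
proof -
  consider (merge) "{1,2} \<in> p"
    | (split) "{1,2} \<notin> p" "{1,2} \<subseteq> odd_block p"
    | (swap) "{1,2} \<notin> p" "\<not> {1,2} \<subseteq> odd_block p"
    by blast
  then show ?thesis
  proof cases
    case merge
    note q = Qset_merge12[OF p merge] pair_subset_odd_block_merge12[OF p merge]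
    have "switch12 p = merge12 p"
      using merge unfolding switch12_def by (simp only: if_True)
    moreover have "switch12 (merge12 p) = p"
      using Qset_pair_block_notin[OF q(1,3)] q(3) split12_merge12[OF p merge]
      unfolding switch12_def by (simp only: if_False if_True)
    ultimately show ?thesis
      using q(1) weight_merge12[OF p merge] by simp
  next
    case split
    have "switch12 p = split12 p"
      using split unfolding switch12_def by (simp only: if_False if_True)
    moreover have "switch12 (split12 p) = p"
      using merge12_split12[OF p split(2)] unfolding switch12_def by (simp add: split12_def)
    ultimately show ?thesis
      using Qset_split12(1)[OF p split(2)] weight_split12[OF p split(2)] by simp
  next
    case swap
    note separated = Qset_separated_pair[OF p swap]
    note q = Qset_swap12[OF p n separated]
    have "{1,2} \<notin> swap12 p" "\<not> {1,2} \<subseteq> odd_block (swap12 p)"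
      using swap12_separated[OF p n separated] QsetD(2)[OF q(1)] by auto
    then have "switch12 (swap12 p) = p"
      unfolding switch12_def by (simp only: if_False swap12_swap12)
    moreover have "switch12 p = swap12 p"
      using swap unfolding switch12_def by (simp only: if_False)
    ultimately show ?thesis
      using q(1) weight_swap12[OF p n separated] by simp
  qed
qed

theorem mainTheorem11:
  fixes n :: nat
  assumes "n \<ge> 3" and "odd n"
  shows "(\<Sum>p\<in>Qset n. eps_part n p * eps2 p) = 0"
proof -
  have "(\<Sum>p\<in>Qset n. weight n p) = 0"
  proof (rule sum_involution_eq_0)
    fix p
    assume p: "p \<in> Qset n"
    have switch: "switch12 p \<in> Qset n" "switch12 (switch12 p) = p" "weight n (switch12 p) = - weight n p"
      using switch12_involution[OF p] assms(1) by simp_all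
    then show "switch12 p \<in> Qset n" "switch12 (switch12 p) = p"
      and "weight n (switch12 p) + weight n p = 0"
      by simp_all
    have "weight n p \<noteq> 0"
      by (simp add: weight_def eps_part_def eps_ord_def sign_def eps2_def)
    with switch(3) show "switch12 p \<noteq> p"
      by auto
  qed
  then show ?thesis
    by (simp add: weight_def)
qed

end
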